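(* Let $G$ be a simple connected graph on $n$ vertices with clique number $\omega\ge 2$ and Wiener index $W$. Let $G_1,\dots,G_k$ be all the cliques of $G$ of order $\omega$, and let $s_i=\sum_{v_j\in V(G_i)}D_j$ for $1\le i\le k$. Then (i) if $\omega=n$, then $S_{\mathcal{Q}}(G)=n$; (ii) if $2\le\omega\le n-1$, then $$S_{\mathcal{Q}}(G)\ge \max_{1\le i\le k}\frac{\sqrt{a_i^{2}-4b_i(n-\omega)\omega}}{(n-\omega)\omega},$$ where $a_i=n\omega(1-\omega)+4\omega(s_i-W)-ns_i$ and $b_i=4W\omega(\omega-1)+4s_i(W-s_i)$.
   Context: $G$ has vertex set $\{v_1,\dots,v_n\}$; $d_G$ is the graph distance; $\mathcal{D}(G)=(d_G(v_i,v_j))$. $D_j=\sum_{l\ne j}d_G(v_j,v_l)$ is the transmission of $v_j$, $Tr(G)=\mathrm{diag}(D_1,\dots,D_n)$, $\mathcal{Q}(G)=Tr(G)+\mathcal{D}(G)$. $W=\sum_{i<j}d_G(v_i,v_j)$ is the Wiener index. A clique is a complete subgraph; the clique number is the largest order of a clique. $S_{\mathcal{Q}}(G)$ is the largest eigenvalue of $\mathcal{Q}(G)$ minus the least eigenvalue of $\mathcal{Q}(G)$. *)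

theory Defs
  imports Complex_Main
begin

definition simple_graph :: "'a set \<Rightarrow> ('a \<Rightarrow> 'a \<Rightarrow> bool) \<Rightarrow> bool" where
  "simple_graph V E \<longleftrightarrow> finite V \<and> (\<forall>u v. E u v \<longrightarrow> u \<in> V \<and> v \<in> V)
     \<and> (\<forall>u v. E u v \<longrightarrow> E v u) \<and> (\<forall>u. \<not> E u u)"

fun is_walk :: "('a \<Rightarrow> 'a \<Rightarrow> bool) \<Rightarrow> 'a list \<Rightarrow> bool" where
  "is_walk E [] = False"
| "is_walk E [x] = True"
| "is_walk E (x # y # xs) = (E x y \<and> is_walk E (y # xs))"

definition walk_of_len :: "('a \<Rightarrow> 'a \<Rightarrow> bool) \<Rightarrow> 'a \<Rightarrow> 'a \<Rightarrow> nat \<Rightarrow> bool" where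
  "walk_of_len E u v k \<longleftrightarrow> (\<exists>xs. is_walk E xs \<and> hd xs = u \<and> last xs = v \<and> length xs = Suc k)"

definition connected_graph :: "'a set \<Rightarrow> ('a \<Rightarrow> 'a \<Rightarrow> bool) \<Rightarrow> bool" where
  "connected_graph V E \<longleftrightarrow> (\<forall>u\<in>V. \<forall>v\<in>V. \<exists>k. walk_of_len E u v k)"

definition gdist :: "('a \<Rightarrow> 'a \<Rightarrow> bool) \<Rightarrow> 'a \<Rightarrow> 'a \<Rightarrow> nat" where
  "gdist E u v = (LEAST k. walk_of_len E u v k)"

definition transmission :: "'a set \<Rightarrow> ('a \<Rightarrow> 'a \<Rightarrow> bool) \<Rightarrow> 'a \<Rightarrow> real" where
  "transmission V E v = (\<Sum>w\<in>V - {v}. real (gdist E v w))"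

definition wiener :: "'a set \<Rightarrow> ('a \<Rightarrow> 'a \<Rightarrow> bool) \<Rightarrow> real" where
  "wiener V E = (\<Sum>u\<in>V. \<Sum>v\<in>V. real (gdist E u v)) / 2"

definition dsl_matrix :: "'a set \<Rightarrow> ('a \<Rightarrow> 'a \<Rightarrow> bool) \<Rightarrow> 'a \<Rightarrow> 'a \<Rightarrow> real" where
  "dsl_matrix V E u v = (if u = v then transmission V E u else 0) + real (gdist E u v)"

definition is_eigenvalue :: "'a set \<Rightarrow> ('a \<Rightarrow> 'a \<Rightarrow> real) \<Rightarrow> real \<Rightarrow> bool" where
  "is_eigenvalue V M mu \<longleftrightarrow> (\<exists>x. (\<exists>v\<in>V. x v \<noteq> 0) \<and>
      (\<forall>u\<in>V. (\<Sum>w\<in>V. M u w * x w) = mu * x u))"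

definition dsl_spread :: "'a set \<Rightarrow> ('a \<Rightarrow> 'a \<Rightarrow> bool) \<Rightarrow> real" where
  "dsl_spread V E = Max {mu. is_eigenvalue V (dsl_matrix V E) mu}
                    - Min {mu. is_eigenvalue V (dsl_matrix V E) mu}"

definition is_clique :: "'a set \<Rightarrow> ('a \<Rightarrow> 'a \<Rightarrow> bool) \<Rightarrow> 'a set \<Rightarrow> bool" where
  "is_clique V E C \<longleftrightarrow> C \<subseteq> V \<and> (\<forall>u\<in>C. \<forall>v\<in>C. u \<noteq> v \<longrightarrow> E u v)"

definition clique_number :: "'a set \<Rightarrow> ('a \<Rightarrow> 'a \<Rightarrow> bool) \<Rightarrow> nat" where
  "clique_number V E = Max {card C | C. is_clique V E C}"

end

theory Submission
  imports Defs "HOL-Analysis.Analysis"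
begin

text \<open>Q(G) is real symmetric, so its largest and least eigenvalues are the maximum and the minimum
  of the Rayleigh quotient; hence S_Q(G) is at least the difference of the Rayleigh quotients of
  any two nonzero vectors. For a clique C of order \<omega>, compress Q(G) to the normalized 2 \<times> 2 matrix
  of block sums over the partition (C, V - C). Its two orthonormal eigenvectors, lifted to vectors
  constant on C and on V - C, have Rayleigh quotients differing by its eigenvalue gap. Distances
  inside C are 1, so the block sums depend only on \<omega>, n, W and the transmissions s of C, which
  gives the stated expression. For the complete graph Q(G) = (n - 2) I + J, with eigenvalues
  2n - 2 and n - 2.\<close>

section \<open>Rayleigh quotients of symmetric matrices\<close>

definition sym_matrix_on :: "'a set \<Rightarrow> ('a \<Rightarrow> 'a \<Rightarrow> real) \<Rightarrow> bool" where
  "sym_matrix_on V M \<longleftrightarrow> (\<forall>u\<in>V. \<forall>w\<in>V. M u w = M w u)"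

definition dot_on :: "'a set \<Rightarrow> ('a \<Rightarrow> real) \<Rightarrow> ('a \<Rightarrow> real) \<Rightarrow> real" where
  "dot_on V x y = (\<Sum>u\<in>V. x u * y u)"

definition bilin_on :: "'a set \<Rightarrow> ('a \<Rightarrow> 'a \<Rightarrow> real) \<Rightarrow> ('a \<Rightarrow> real) \<Rightarrow> ('a \<Rightarrow> real) \<Rightarrow> real" where
  "bilin_on V M x y = (\<Sum>u\<in>V. x u * (\<Sum>w\<in>V. M u w * y w))"

lemma dot_on_commute: "dot_on V x y = dot_on V y x"
  unfolding dot_on_def by (simp add: mult.commute)

lemma dot_on_self_nonneg: "dot_on V x x \<ge> 0"
  unfolding dot_on_def by (auto intro: sum_nonneg)

lemma dot_on_self_eq_0_iff:
  assumes "finite V"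
  shows "dot_on V x x = 0 \<longleftrightarrow> (\<forall>u\<in>V. x u = 0)"
  unfolding dot_on_def using assms by (simp add: sum_nonneg_eq_0_iff)

lemma dot_on_cong:
  "(\<And>u. u \<in> V \<Longrightarrow> x u = x' u) \<Longrightarrow> (\<And>u. u \<in> V \<Longrightarrow> y u = y' u) \<Longrightarrow> dot_on V x y = dot_on V x' y'"
  unfolding dot_on_def by (auto intro!: sum.cong)

lemma bilin_on_cong:
  "(\<And>u. u \<in> V \<Longrightarrow> x u = x' u) \<Longrightarrow> (\<And>u. u \<in> V \<Longrightarrow> y u = y' u) \<Longrightarrow> bilin_on V M x y = bilin_on V M x' y'"
  unfolding bilin_on_def by (auto intro!: sum.cong)

lemma bilin_on_commute:
  assumes "sym_matrix_on V M"
  shows "bilin_on V M x y = bilin_on V M y x"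
proof -
  have "bilin_on V M x y = (\<Sum>u\<in>V. \<Sum>w\<in>V. x u * M u w * y w)"
    unfolding bilin_on_def by (simp add: sum_distrib_left mult.assoc)
  also have "\<dots> = (\<Sum>w\<in>V. \<Sum>u\<in>V. y w * M w u * x u)"
    using assms unfolding sym_matrix_on_def by (subst sum.swap) (auto intro!: sum.cong)
  also have "\<dots> = bilin_on V M y x"
    unfolding bilin_on_def by (simp add: sum_distrib_left mult.assoc)
  finally show ?thesis .
qed

lemma dot_on_scale: "dot_on V (\<lambda>u. c * x u) (\<lambda>u. c * x u) = c\<^sup>2 * dot_on V x x"
  unfolding dot_on_def by (simp add: algebra_simps sum_distrib_left power2_eq_square)

lemma bilin_on_scale: "bilin_on V M (\<lambda>u. c * x u) (\<lambda>u. c * x u) = c\<^sup>2 * bilin_on V M x x"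
  unfolding bilin_on_def by (simp add: algebra_simps sum_distrib_left power2_eq_square)

lemma dot_on_add_scaled:
  "dot_on V (\<lambda>u. x u + t * y u) (\<lambda>u. x u + t * y u)
     = dot_on V x x + 2 * t * dot_on V y x + t\<^sup>2 * dot_on V y y"
  unfolding dot_on_def
  by (simp add: algebra_simps power2_eq_square sum.distrib sum_distrib_left)

lemma bilin_on_add_scaled:
  assumes "sym_matrix_on V M"
  shows "bilin_on V M (\<lambda>u. x u + t * y u) (\<lambda>u. x u + t * y u)
     = bilin_on V M x x + 2 * t * bilin_on V M y x + t\<^sup>2 * bilin_on V M y y"
proof -
  have "bilin_on V M (\<lambda>u. x u + t * y u) (\<lambda>u. x u + t * y u)
      = bilin_on V M x x + t * bilin_on V M x y + t * bilin_on V M y x + t\<^sup>2 * bilin_on V M y y"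
    unfolding bilin_on_def
    by (simp add: algebra_simps power2_eq_square sum.distrib sum_distrib_left)
  then show ?thesis using bilin_on_commute[OF assms, of x y] by simp
qed

lemma bilin_on_eigenvector:
  "(\<forall>u\<in>V. (\<Sum>w\<in>V. M u w * x w) = l * x u) \<Longrightarrow> bilin_on V M y x = l * dot_on V y x"
  unfolding bilin_on_def dot_on_def by (simp add: sum_distrib_left algebra_simps)

lemma dot_on_sum_left:
  "dot_on V (\<lambda>w. \<Sum>k\<in>F. a k * f k w) z = (\<Sum>k\<in>F. a k * dot_on V (f k) z)"
  unfolding dot_on_def
  by (simp add: sum_distrib_left sum_distrib_right mult.assoc sum.swap[of _ V])

lemma linear_coeff_zero_if_quadratic_nonpos:
  fixes a b :: real
  assumes "\<And>t. t * a + t\<^sup>2 * b \<le> 0"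
  shows "a = 0"
proof (rule ccontr)
  assume "a \<noteq> 0"
  define c where "c = \<bar>b\<bar> + 1"
  define t where "t = a / c"
  have "c > 0" unfolding c_def by simp
  have "t\<^sup>2 * (- \<bar>b\<bar>) \<le> t\<^sup>2 * b"
    by (rule mult_left_mono) auto
  then have "t * a + t\<^sup>2 * b \<ge> t * a - t\<^sup>2 * (c - 1)"
    unfolding c_def by simp
  also have "t * a - t\<^sup>2 * (c - 1) = a\<^sup>2 / c\<^sup>2"
    unfolding t_def using \<open>c > 0\<close> by (simp add: field_simps power2_eq_square)
  finally show False
    using assms[of t] \<open>a \<noteq> 0\<close> \<open>c > 0\<close> by (smt (verit) divide_pos_pos zero_less_power2)
qed

lemma rayleigh_bound_from_unit_vectors:
  assumes fin: "finite V" and unit: "\<And>x. dot_on V x x = 1 \<Longrightarrow> bilin_on V M x x \<le> l"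
  shows "bilin_on V M x x \<le> l * dot_on V x x"
proof (cases "dot_on V x x = 0")
  case True
  then have "bilin_on V M x x = bilin_on V M (\<lambda>_. 0) (\<lambda>_. 0)"
    using dot_on_self_eq_0_iff[OF fin] by (auto intro: bilin_on_cong)
  then show ?thesis using True by (simp add: bilin_on_def)
next
  case False
  then have pos: "dot_on V x x > 0" using dot_on_self_nonneg[of V x] by linarith
  define c where "c = 1 / sqrt (dot_on V x x)"
  have c2: "c\<^sup>2 = 1 / dot_on V x x" unfolding c_def using pos by (simp add: power_divide)
  have "dot_on V (\<lambda>u. c * x u) (\<lambda>u. c * x u) = 1" unfolding dot_on_scale c2 using pos by simp
  then have "c\<^sup>2 * bilin_on V M x x \<le> l" using unit[of "\<lambda>u. c * x u"] by (simp add: bilin_on_scale)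
  then show ?thesis using pos unfolding c2 by (simp add: divide_le_eq mult.commute)
qed

lemma rayleigh_sup_attained:
  assumes fin: "finite V" and ne: "V \<noteq> {}"
  obtains x0 where "dot_on V x0 x0 = 1" "\<And>x. bilin_on V M x x \<le> bilin_on V M x0 x0 * dot_on V x x"
proof -
  define X where "X = product_topology (\<lambda>_. euclideanreal) V"
  define f where "f = (\<lambda>x. bilin_on V M x x)"
  define g where "g = (\<lambda>x. dot_on V x x)"
  define K where "K = {x \<in> topspace X. g x = 1} \<inter> PiE V (\<lambda>_. {-1..1::real})"
  have contf: "continuous_map X euclideanreal f"
    unfolding X_def f_def bilin_on_def by (intro continuous_intros fin) (auto intro!: continuous_intros)
  have contg: "continuous_map X euclideanreal g"
    unfolding X_def g_def dot_on_def by (intro continuous_intros fin) (auto intro!: continuous_intros)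
  have "compactin X K"
    unfolding K_def
  proof (rule closed_Int_compactin)
    show "closedin X {x \<in> topspace X. g x = 1}"
      using closedin_continuous_map_preimage[OF contg, of "{1}"] by simp
    show "compactin X (PiE V (\<lambda>_. {-1..1::real}))"
      unfolding X_def compactin_PiE by auto
  qed
  then have compact_fK: "compact (f ` K)"
    using image_compactin[OF _ contf] by simp
  have unit_in_K: "restrict x V \<in> K" if "g x = 1" for x
  proof -
    have "(x u)\<^sup>2 \<le> 1" if "u \<in> V" for u
      using member_le_sum[of u V "\<lambda>u. x u * x u"] fin \<open>g x = 1\<close> \<open>u \<in> V\<close>
      unfolding g_def dot_on_def by (simp add: power2_eq_square)
    then have "\<forall>u\<in>V. x u \<in> {-1..1}"
      using abs_square_le_1 by (auto simp: abs_le_iff)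
    moreover have "g (restrict x V) = g x"
      unfolding g_def by (rule dot_on_cong) auto
    ultimately show ?thesis using \<open>g x = 1\<close> unfolding K_def X_def by (auto simp: PiE_def)
  qed
  obtain v0 where "v0 \<in> V" using ne by auto
  then have "g (\<lambda>w. of_bool (w = v0)) = 1"
    unfolding g_def dot_on_def using fin by simp
  then have "K \<noteq> {}" using unit_in_K by blast
  then obtain z where "z \<in> f ` K" "\<forall>y\<in>f ` K. y \<le> z"
    using compact_attains_sup[OF compact_fK] by blast
  then obtain x0 where x0K: "x0 \<in> K" and x0max: "\<And>x. x \<in> K \<Longrightarrow> f x \<le> f x0"
    by blast
  have "bilin_on V M x x \<le> f x0" if "dot_on V x x = 1" for x
  proof -
    have "f (restrict x V) = bilin_on V M x x"
      unfolding f_def by (rule bilin_on_cong) auto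
    then show ?thesis using x0max[OF unit_in_K[of x]] that unfolding g_def by simp
  qed
  then have "bilin_on V M x x \<le> f x0 * dot_on V x x" for x
    by (rule rayleigh_bound_from_unit_vectors[OF fin])
  moreover have "dot_on V x0 x0 = 1" using x0K unfolding K_def g_def by simp
  ultimately show ?thesis using that[of x0] unfolding f_def by blast
qed

lemma eigenvector_if_rayleigh_max:
  assumes fin: "finite V" and sym: "sym_matrix_on V M"
    and bound: "\<And>x. bilin_on V M x x \<le> l * dot_on V x x"
    and x0: "bilin_on V M x0 x0 = l * dot_on V x0 x0"
  shows "\<forall>u\<in>V. (\<Sum>w\<in>V. M u w * x0 w) = l * x0 u"
proof -
  have stationary: "2 * (bilin_on V M y x0 - l * dot_on V y x0) = 0" for y
  proof (rule linear_coeff_zero_if_quadratic_nonpos)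
    fix t
    have "bilin_on V M (\<lambda>u. x0 u + t * y u) (\<lambda>u. x0 u + t * y u)
        \<le> l * dot_on V (\<lambda>u. x0 u + t * y u) (\<lambda>u. x0 u + t * y u)"
      by (rule bound)
    then show "t * (2 * (bilin_on V M y x0 - l * dot_on V y x0))
        + t\<^sup>2 * (bilin_on V M y y - l * dot_on V y y) \<le> 0"
      unfolding bilin_on_add_scaled[OF sym] dot_on_add_scaled using x0
      by (simp add: algebra_simps)
  qed
  define r where "r = (\<lambda>u. (\<Sum>w\<in>V. M u w * x0 w) - l * x0 u)"
  have "dot_on V r r = bilin_on V M r x0 - l * dot_on V r x0"
    unfolding bilin_on_def dot_on_def r_def
    by (simp add: algebra_simps sum_subtractf sum_distrib_left sum.distrib)
  then have "dot_on V r r = 0" using stationary by simp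
  then show ?thesis using dot_on_self_eq_0_iff[OF fin] unfolding r_def by simp
qed

lemma max_eigenvalue_bounds_rayleigh:
  assumes "finite V" "V \<noteq> {}" "sym_matrix_on V M"
  obtains l where "is_eigenvalue V M l" "\<And>x. bilin_on V M x x \<le> l * dot_on V x x"
proof -
  obtain x0 where x0: "dot_on V x0 x0 = 1"
    and bound: "\<And>x. bilin_on V M x x \<le> bilin_on V M x0 x0 * dot_on V x x"
    using rayleigh_sup_attained[OF assms(1,2)] by blast
  have "dot_on V x0 x0 \<noteq> 0" using x0(1) by simp
  then have "\<exists>v\<in>V. x0 v \<noteq> 0" using dot_on_self_eq_0_iff[OF assms(1)] by blast
  moreover have "\<forall>u\<in>V. (\<Sum>w\<in>V. M u w * x0 w) = bilin_on V M x0 x0 * x0 u"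
    using eigenvector_if_rayleigh_max[OF assms(1,3) bound] x0 by simp
  ultimately show ?thesis using that bound unfolding is_eigenvalue_def by blast
qed

lemma is_eigenvalue_uminus:
  assumes "is_eigenvalue V (\<lambda>u w. - M u w) l"
  shows "is_eigenvalue V M (- l)"
proof -
  obtain x where "\<exists>v\<in>V. x v \<noteq> 0" and eq: "\<forall>u\<in>V. (\<Sum>w\<in>V. - M u w * x w) = l * x u"
    using assms unfolding is_eigenvalue_def by blast
  moreover have "(\<Sum>w\<in>V. M u w * x w) = - (\<Sum>w\<in>V. - M u w * x w)" for u
    by (simp add: sum_negf)
  ultimately show ?thesis unfolding is_eigenvalue_def by (intro exI[of _ x]) auto
qed

lemma min_eigenvalue_bounds_rayleigh:
  assumes "finite V" "V \<noteq> {}" "sym_matrix_on V M"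
  obtains l where "is_eigenvalue V M l" "\<And>x. l * dot_on V x x \<le> bilin_on V M x x"
proof -
  have "sym_matrix_on V (\<lambda>u w. - M u w)"
    using assms(3) unfolding sym_matrix_on_def by simp
  then obtain l where l: "is_eigenvalue V (\<lambda>u w. - M u w) l"
    and bound: "\<And>x. bilin_on V (\<lambda>u w. - M u w) x x \<le> l * dot_on V x x"
    using max_eigenvalue_bounds_rayleigh[OF assms(1,2)] by blast
  have "- l * dot_on V x x \<le> bilin_on V M x x" for x
  proof -
    have "bilin_on V (\<lambda>u w. - M u w) x x = - bilin_on V M x x"
      unfolding bilin_on_def by (simp add: sum_negf)
    then show ?thesis using bound[of x] by simp
  qed
  then show ?thesis using that is_eigenvalue_uminus[OF l] by blast
qed

lemma unit_eigenvector_exists: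
  assumes "finite V" "is_eigenvalue V M l"
  obtains e where "\<forall>u\<in>V. (\<Sum>w\<in>V. M u w * e w) = l * e u" "dot_on V e e = 1"
proof -
  obtain x where x: "\<exists>v\<in>V. x v \<noteq> 0" "\<forall>u\<in>V. (\<Sum>w\<in>V. M u w * x w) = l * x u"
    using assms(2) unfolding is_eigenvalue_def by blast
  have "dot_on V x x \<noteq> 0" using x(1) dot_on_self_eq_0_iff[OF assms(1)] by blast
  then have pos: "dot_on V x x > 0" using dot_on_self_nonneg[of V x] by linarith
  define c where "c = 1 / sqrt (dot_on V x x)"
  have "(\<Sum>w\<in>V. M u w * (c * x w)) = c * (\<Sum>w\<in>V. M u w * x w)" for u
    by (simp add: sum_distrib_left algebra_simps)
  then have "(\<Sum>w\<in>V. M u w * (c * x w)) = l * (c * x u)" if "u \<in> V" for u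
    using x(2) that by simp
  moreover have "dot_on V (\<lambda>u. c * x u) (\<lambda>u. c * x u) = 1"
    unfolding dot_on_scale c_def using pos by (simp add: power_divide)
  ultimately show ?thesis using that[of "\<lambda>u. c * x u"] by blast
qed

lemma eigenvectors_orthogonal:
  assumes "sym_matrix_on V M" "l \<noteq> k"
    and "\<forall>u\<in>V. (\<Sum>w\<in>V. M u w * x w) = l * x u"
    and "\<forall>u\<in>V. (\<Sum>w\<in>V. M u w * y w) = k * y u"
  shows "dot_on V x y = 0"
proof -
  have "l * dot_on V x y = bilin_on V M y x"
    using bilin_on_eigenvector[OF assms(3)] dot_on_commute by metis
  also have "\<dots> = k * dot_on V x y"
    using bilin_on_eigenvector[OF assms(4)] bilin_on_commute[OF assms(1)] by metis
  finally show ?thesis using assms(2) by simp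
qed

lemma card_orthonormal_le:
  assumes fin: "finite V" and "finite F"
    and orth: "\<And>l k. l \<in> F \<Longrightarrow> k \<in> F \<Longrightarrow> dot_on V (e l) (e k) = of_bool (l = k)"
  shows "card F \<le> card V"
proof -
  have bessel: "(\<Sum>l\<in>F. (e l v)\<^sup>2) \<le> 1" if "v \<in> V" for v
  proof -
    define \<delta> where "\<delta> = (\<lambda>w. of_bool (w = v) :: real)"
    define y where "y = (\<lambda>w. \<Sum>l\<in>F. e l v * e l w)"
    define S where "S = (\<Sum>l\<in>F. (e l v)\<^sup>2)"
    have "dot_on V \<delta> \<delta> = 1" "dot_on V y \<delta> = S"
      unfolding \<delta>_def y_def S_def dot_on_def using fin \<open>v \<in> V\<close>
      by (simp_all add: power2_eq_square)
    moreover have "dot_on V y (e k) = e k v" if "k \<in> F" for k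
    proof -
      have "dot_on V y (e k) = (\<Sum>l\<in>F. e l v * of_bool (l = k))"
        unfolding y_def dot_on_sum_left using orth[OF _ that] by simp
      then show ?thesis using \<open>finite F\<close> that by simp
    qed
    then have "dot_on V y y = S"
      unfolding S_def by (subst (2) y_def) (simp add: dot_on_commute[of V y] dot_on_sum_left
          power2_eq_square)
    moreover have "0 \<le> dot_on V (\<lambda>u. \<delta> u + (-1) * y u) (\<lambda>u. \<delta> u + (-1) * y u)"
      by (rule dot_on_self_nonneg)
    ultimately show ?thesis unfolding dot_on_add_scaled S_def by simp
  qed
  have "real (card F) = (\<Sum>l\<in>F. dot_on V (e l) (e l))" using orth by simp
  also have "\<dots> = (\<Sum>v\<in>V. \<Sum>l\<in>F. (e l v)\<^sup>2)"
    unfolding dot_on_def by (subst sum.swap) (simp add: power2_eq_square)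
  also have "\<dots> \<le> real (card V)" using sum_mono[OF bessel] by simp
  finally show ?thesis by simp
qed

lemma finite_eigenvalues:
  assumes fin: "finite V" and sym: "sym_matrix_on V M"
  shows "finite {l. is_eigenvalue V M l}"
proof (rule ccontr)
  assume "infinite {l. is_eigenvalue V M l}"
  then obtain F where F: "F \<subseteq> {l. is_eigenvalue V M l}" "finite F" "card F = Suc (card V)"
    using infinite_arbitrarily_large by blast
  have "\<exists>e. (\<forall>u\<in>V. (\<Sum>w\<in>V. M u w * e w) = l * e u) \<and> dot_on V e e = 1" if "l \<in> F" for l
    using unit_eigenvector_exists[OF fin, of M l] F(1) that by blast
  then obtain e where e: "\<And>l. l \<in> F \<Longrightarrow> (\<forall>u\<in>V. (\<Sum>w\<in>V. M u w * e l w) = l * e l u) \<and> dot_on V (e l) (e l) = 1"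
    by metis
  have "dot_on V (e l) (e k) = of_bool (l = k)" if "l \<in> F" "k \<in> F" for l k
    using e[OF that(1)] e[OF that(2)] eigenvectors_orthogonal[OF sym] by (cases "l = k") auto
  then have "card F \<le> card V" by (rule card_orthonormal_le[OF fin F(2)])
  then show False using F(3) by simp
qed

lemma eigenvalue_spread_ge_rayleigh_diff:
  assumes fin: "finite V" and ne: "V \<noteq> {}" and sym: "sym_matrix_on V M"
    and x: "dot_on V x x > 0" and y: "dot_on V y y > 0"
  shows "bilin_on V M x x / dot_on V x x - bilin_on V M y y / dot_on V y y
      \<le> Max {l. is_eigenvalue V M l} - Min {l. is_eigenvalue V M l}"
proof -
  obtain l1 where l1: "is_eigenvalue V M l1" "\<And>x. bilin_on V M x x \<le> l1 * dot_on V x x"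
    using max_eigenvalue_bounds_rayleigh[OF fin ne sym] by blast
  obtain l2 where l2: "is_eigenvalue V M l2" "\<And>x. l2 * dot_on V x x \<le> bilin_on V M x x"
    using min_eigenvalue_bounds_rayleigh[OF fin ne sym] by blast
  have "l1 \<le> Max {l. is_eigenvalue V M l}" "Min {l. is_eigenvalue V M l} \<le> l2"
    using finite_eigenvalues[OF fin sym] l1(1) l2(1) by auto
  moreover have "bilin_on V M x x / dot_on V x x \<le> l1" using l1(2) x by (simp add: divide_le_eq)
  moreover have "l2 \<le> bilin_on V M y y / dot_on V y y" using l2(2) y by (simp add: le_divide_eq)
  ultimately show ?thesis by linarith
qed

section \<open>Two-block test vectors\<close>

definition block_sum :: "('a \<Rightarrow> 'a \<Rightarrow> real) \<Rightarrow> 'a set \<Rightarrow> 'a set \<Rightarrow> real" where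
  "block_sum M A B = (\<Sum>u\<in>A. \<Sum>w\<in>B. M u w)"

lemma block_sum_commute:
  assumes "sym_matrix_on V M" "A \<subseteq> V" "B \<subseteq> V"
  shows "block_sum M B A = block_sum M A B"
  unfolding block_sum_def using assms unfolding sym_matrix_on_def
  by (subst sum.swap) (auto intro!: sum.cong)

lemma block_sum_split:
  assumes "finite V" "C \<subseteq> V"
  shows "block_sum M V V = block_sum M C C + block_sum M C (V - C)
    + block_sum M (V - C) C + block_sum M (V - C) (V - C)"
  unfolding block_sum_def using assms
  by (simp add: sum.subset_diff[of C V] sum.distrib)

lemma dot_on_step_vector:
  assumes "finite V" "C \<subseteq> V"
  shows "dot_on V (\<lambda>u. if u \<in> C then a else b) (\<lambda>u. if u \<in> C then a else b)
    = a\<^sup>2 * card C + b\<^sup>2 * card (V - C)"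
  unfolding dot_on_def using assms
  by (simp add: sum.subset_diff[of C V] power2_eq_square)

lemma bilin_on_step_vector:
  assumes "finite V" "C \<subseteq> V" "sym_matrix_on V M"
  shows "bilin_on V M (\<lambda>u. if u \<in> C then a else b) (\<lambda>u. if u \<in> C then a else b)
    = a\<^sup>2 * block_sum M C C + 2 * a * b * block_sum M C (V - C)
      + b\<^sup>2 * block_sum M (V - C) (V - C)"
proof -
  let ?x = "\<lambda>u. if u \<in> C then a else b"
  have row: "(\<Sum>w\<in>V. M u w * ?x w) = a * (\<Sum>w\<in>C. M u w) + b * (\<Sum>w\<in>V - C. M u w)" for u
    using assms(1,2) by (simp add: sum.subset_diff[of C V] sum_distrib_left mult.commute)
  have "bilin_on V M ?x ?x = a\<^sup>2 * block_sum M C C + a * b * block_sum M C (V - C)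
      + a * b * block_sum M (V - C) C + b\<^sup>2 * block_sum M (V - C) (V - C)"
    unfolding bilin_on_def row block_sum_def using assms(1,2)
    by (simp add: sum.subset_diff[of C V] sum.distrib sum_distrib_left algebra_simps
        power2_eq_square)
  then show ?thesis using block_sum_commute[OF assms(3) Diff_subset assms(2)] by simp
qed

lemma rotation_attains_norm:
  fixes u v :: real
  obtains a b where "a\<^sup>2 + b\<^sup>2 = 1" "(a\<^sup>2 - b\<^sup>2) * u + 2 * a * b * v = sqrt (u\<^sup>2 + v\<^sup>2)"
proof (cases "u\<^sup>2 + v\<^sup>2 = 0")
  case True
  then have "u = 0" "v = 0" by (simp_all add: sum_power2_eq_zero_iff)
  then show ?thesis using that[of 1 0] by simp
next
  case False
  define D where "D = sqrt (u\<^sup>2 + v\<^sup>2)"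
  have "u\<^sup>2 + v\<^sup>2 > 0" using False by (simp add: sum_power2_gt_zero_iff sum_power2_eq_zero_iff)
  then have "D > 0" unfolding D_def by simp
  have "(u / D)\<^sup>2 + (v / D)\<^sup>2 = 1"
    unfolding D_def using False by (simp add: power_divide add_divide_distrib[symmetric])
  then obtain t where t: "u / D = cos t" "v / D = sin t"
    using sincos_total_2pi by metis
  then have uv: "u = D * cos t" "v = D * sin t" using \<open>D > 0\<close> by (simp_all add: field_simps)
  have half_angle: "(cos (t/2))\<^sup>2 - (sin (t/2))\<^sup>2 = cos t" "2 * cos (t/2) * sin (t/2) = sin t"
    using cos_double[of "t/2"] sin_double[of "t/2"] by (simp_all add: mult.commute)
  have "((cos (t/2))\<^sup>2 - (sin (t/2))\<^sup>2) * u + 2 * cos (t/2) * sin (t/2) * v = cos t * u + sin t * v"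
    unfolding half_angle ..
  also have "\<dots> = D * ((cos t)\<^sup>2 + (sin t)\<^sup>2)" unfolding uv by algebra
  also have "\<dots> = D" by simp
  finally show ?thesis using that[of "cos (t/2)" "sin (t/2)"] unfolding D_def by simp
qed

lemma eigenvalue_spread_ge_two_block:
  assumes fin: "finite V" and sym: "sym_matrix_on V M"
    and CV: "C \<subseteq> V" "C \<noteq> {}" "C \<noteq> V"
  defines "w \<equiv> real (card C)" and "m \<equiv> real (card (V - C))"
    and "P \<equiv> block_sum M C C" and "H \<equiv> block_sum M C (V - C)" and "R \<equiv> block_sum M (V - C) (V - C)"
  shows "sqrt ((m * P - w * R)\<^sup>2 + 4 * w * m * H\<^sup>2) / (w * m)
    \<le> Max {l. is_eigenvalue V M l} - Min {l. is_eigenvalue V M l}"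
proof -
  have "w > 0" unfolding w_def using CV fin by (simp add: card_gt_0_iff finite_subset)
  have "m > 0" unfolding m_def using CV fin by (simp add: card_gt_0_iff)
  define p where "p = P / w"
  define r where "r = R / m"
  define q where "q = H / sqrt (w * m)"
  obtain a b where ab: "a\<^sup>2 + b\<^sup>2 = 1"
    "(a\<^sup>2 - b\<^sup>2) * (p - r) + 2 * a * b * (2 * q) = sqrt ((p - r)\<^sup>2 + (2 * q)\<^sup>2)"
    using rotation_attains_norm by blast
  \<comment> \<open>x and y lift the orthonormal eigenvectors (a, b) and (-b, a) of [[p, q], [q, r]].\<close>
  define x where "x = (\<lambda>u. if u \<in> C then a / sqrt w else b / sqrt m)"
  define y where "y = (\<lambda>u. if u \<in> C then - b / sqrt w else a / sqrt m)"
  have unit: "dot_on V x x = 1" "dot_on V y y = 1"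
    unfolding x_def y_def dot_on_step_vector[OF fin CV(1)] w_def[symmetric] m_def[symmetric]
    using ab(1) \<open>w > 0\<close> \<open>m > 0\<close> by (simp_all add: power_divide)
  have "bilin_on V M x x = a\<^sup>2 * p + 2 * a * b * q + b\<^sup>2 * r"
    "bilin_on V M y y = b\<^sup>2 * p - 2 * a * b * q + a\<^sup>2 * r"
    unfolding x_def y_def bilin_on_step_vector[OF fin CV(1) sym] P_def[symmetric]
      H_def[symmetric] R_def[symmetric] p_def q_def r_def
    using \<open>w > 0\<close> \<open>m > 0\<close> by (simp_all add: power_divide real_sqrt_mult)
  then have "bilin_on V M x x - bilin_on V M y y = sqrt ((p - r)\<^sup>2 + (2 * q)\<^sup>2)"
    unfolding ab(2)[symmetric] by (simp add: algebra_simps)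
  moreover have "V \<noteq> {}" using CV by auto
  ultimately have "sqrt ((p - r)\<^sup>2 + (2 * q)\<^sup>2)
      \<le> Max {l. is_eigenvalue V M l} - Min {l. is_eigenvalue V M l}"
    using eigenvalue_spread_ge_rayleigh_diff[OF fin _ sym, of x y] unit by simp
  moreover have "(p - r)\<^sup>2 + (2 * q)\<^sup>2 = ((m * P - w * R)\<^sup>2 + 4 * w * m * H\<^sup>2) / (w * m)\<^sup>2"
    unfolding p_def r_def q_def using \<open>w > 0\<close> \<open>m > 0\<close>
    by (simp add: field_simps power2_eq_square)
  ultimately show ?thesis using \<open>w > 0\<close> \<open>m > 0\<close> by (simp add: real_sqrt_divide)
qed

section \<open>Graph distances and the distance signless Laplacian\<close>

lemma is_walk_iff_successively: "is_walk E xs \<longleftrightarrow> xs \<noteq> [] \<and> successively E xs"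
  by (induction xs rule: induct_list012) auto

lemma walk_of_len_0_iff: "walk_of_len E u v 0 \<longleftrightarrow> u = v"
  unfolding walk_of_len_def by (auto simp: length_Suc_conv intro!: exI[of _ "[u]"])

lemma walk_of_len_1: "E u v \<Longrightarrow> walk_of_len E u v 1"
  unfolding walk_of_len_def by (auto intro!: exI[of _ "[u, v]"])

lemma walk_of_len_commute:
  assumes "symp E" "walk_of_len E u v k"
  shows "walk_of_len E v u k"
proof -
  obtain xs where xs: "xs \<noteq> []" "successively E xs" "hd xs = u" "last xs = v" "length xs = Suc k"
    using assms(2) unfolding walk_of_len_def is_walk_iff_successively by blast
  have "successively E (rev xs)"
    using successively_mono[OF xs(2)] assms(1) by (simp add: symp_def)
  then show ?thesis unfolding walk_of_len_def is_walk_iff_successively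
    using xs by (intro exI[of _ "rev xs"]) (simp add: hd_rev last_rev)
qed

lemma gdist_self: "gdist E u u = 0"
  unfolding gdist_def by (simp add: walk_of_len_0_iff)

lemma gdist_adjacent:
  assumes "u \<noteq> v" "E u v"
  shows "gdist E u v = 1"
  unfolding gdist_def
proof (rule Least_equality)
  show "walk_of_len E u v 1" using assms(2) by (rule walk_of_len_1)
  show "1 \<le> k" if "walk_of_len E u v k" for k
    using that assms(1) by (cases k) (auto simp: walk_of_len_0_iff)
qed

lemma gdist_commute:
  assumes "symp E"
  shows "gdist E u v = gdist E v u"
proof -
  have "walk_of_len E u v = walk_of_len E v u"
    using walk_of_len_commute[OF assms] by blast
  then show ?thesis unfolding gdist_def by simp
qed

lemma simple_graph_finite: "simple_graph V E \<Longrightarrow> finite V"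
  unfolding simple_graph_def by blast

lemma simple_graph_symp: "simple_graph V E \<Longrightarrow> symp E"
  unfolding simple_graph_def symp_def by blast

lemma transmission_eq_sum:
  "finite V \<Longrightarrow> u \<in> V \<Longrightarrow> transmission V E u = (\<Sum>w\<in>V. real (gdist E u w))"
  unfolding transmission_def by (simp add: sum_diff1 gdist_self)

lemma sym_matrix_on_dsl_matrix: "simple_graph V E \<Longrightarrow> sym_matrix_on V (dsl_matrix V E)"
  unfolding sym_matrix_on_def dsl_matrix_def
  using gdist_commute[OF simple_graph_symp] by auto

lemma gdist_in_clique:
  "is_clique V E C \<Longrightarrow> u \<in> C \<Longrightarrow> v \<in> C \<Longrightarrow> gdist E u v = of_bool (u \<noteq> v)"
  unfolding is_clique_def by (auto simp: gdist_self gdist_adjacent)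

lemma dsl_matrix_row_sum:
  assumes "finite A"
  shows "(\<Sum>v\<in>A. dsl_matrix V E u v)
    = of_bool (u \<in> A) * transmission V E u + (\<Sum>v\<in>A. real (gdist E u v))"
  unfolding dsl_matrix_def using assms by (simp add: sum.distrib)

lemma block_sum_dsl_matrix_all:
  assumes "simple_graph V E"
  shows "block_sum (dsl_matrix V E) V V = 4 * wiener V E"
proof -
  have fin: "finite V" using assms by (rule simple_graph_finite)
  have "block_sum (dsl_matrix V E) V V = (\<Sum>u\<in>V. 2 * (\<Sum>v\<in>V. real (gdist E u v)))"
    unfolding block_sum_def using fin
    by (intro sum.cong) (simp_all add: dsl_matrix_row_sum transmission_eq_sum)
  also have "\<dots> = 2 * (\<Sum>u\<in>V. \<Sum>v\<in>V. real (gdist E u v))"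
    by (rule sum_distrib_left[symmetric])
  finally show ?thesis unfolding wiener_def by simp
qed

lemma block_sum_dsl_matrix_clique:
  assumes "simple_graph V E" "is_clique V E C"
  defines "w \<equiv> real (card C)" and "s \<equiv> (\<Sum>v\<in>C. transmission V E v)"
  shows "block_sum (dsl_matrix V E) C C = s + w * (w - 1)"
    and "block_sum (dsl_matrix V E) C (V - C) = s - w * (w - 1)"
proof -
  have fin: "finite V" using assms(1) by (rule simple_graph_finite)
  have CV: "C \<subseteq> V" using assms(2) unfolding is_clique_def by blast
  then have "finite C" using fin finite_subset by blast
  have inner: "(\<Sum>v\<in>C. real (gdist E u v)) = w - 1" if "u \<in> C" for u
  proof -
    have "(\<Sum>v\<in>C. real (gdist E u v)) = (\<Sum>v\<in>C. 1 - of_bool (u = v))"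
      using gdist_in_clique[OF assms(2) that] by (intro sum.cong) auto
    then show ?thesis unfolding w_def using \<open>finite C\<close> that by (simp add: sum_subtractf)
  qed
  have outer: "(\<Sum>v\<in>V - C. real (gdist E u v)) = transmission V E u - (w - 1)" if "u \<in> C" for u
    using that CV fin inner[OF that]
    by (simp add: transmission_eq_sum subsetD sum.subset_diff[of C V])
  show "block_sum (dsl_matrix V E) C C = s + w * (w - 1)"
    unfolding block_sum_def s_def using \<open>finite C\<close> CV inner
    by (simp add: dsl_matrix_row_sum subsetD sum.distrib w_def)
  show "block_sum (dsl_matrix V E) C (V - C) = s - w * (w - 1)"
    unfolding block_sum_def s_def using fin CV outer
    by (simp add: dsl_matrix_row_sum subsetD sum_subtractf w_def)
qed

section \<open>Spread bounds\<close>

lemma dsl_spread_ge_clique_bound: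
  assumes sg: "simple_graph V E" and cl: "is_clique V E C" and "C \<noteq> {}" "C \<noteq> V"
  defines "n \<equiv> real (card V)" and "\<omega> \<equiv> real (card C)" and "W \<equiv> wiener V E"
    and "s \<equiv> (\<Sum>v\<in>C. transmission V E v)"
  defines "a \<equiv> n * \<omega> * (1 - \<omega>) + 4 * \<omega> * (s - W) - n * s"
    and "b \<equiv> 4 * W * \<omega> * (\<omega> - 1) + 4 * s * (W - s)"
  shows "sqrt (a\<^sup>2 - 4 * b * (n - \<omega>) * \<omega>) / ((n - \<omega>) * \<omega>) \<le> dsl_spread V E"
proof -
  let ?Q = "dsl_matrix V E"
  have fin: "finite V" using sg by (rule simple_graph_finite)
  have CV: "C \<subseteq> V" using cl unfolding is_clique_def by blast
  have sym: "sym_matrix_on V ?Q" using sg by (rule sym_matrix_on_dsl_matrix)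
  define m where "m = real (card (V - C))"
  have nm: "n - \<omega> = m"
    unfolding n_def \<omega>_def m_def using fin CV by (simp add: card_Diff_subset card_mono finite_subset)
  define P where "P = block_sum ?Q C C"
  define H where "H = block_sum ?Q C (V - C)"
  define R where "R = block_sum ?Q (V - C) (V - C)"
  have PH: "P = s + \<omega> * (\<omega> - 1)" "H = s - \<omega> * (\<omega> - 1)"
    unfolding P_def H_def s_def \<omega>_def using block_sum_dsl_matrix_clique[OF sg cl] by simp_all
  have "4 * W = P + 2 * H + R"
    unfolding W_def P_def H_def R_def block_sum_dsl_matrix_all[OF sg, symmetric]
      block_sum_split[OF fin CV] block_sum_commute[OF sym Diff_subset CV] by simp
  then have "R = 4 * W - 3 * s + \<omega> * (\<omega> - 1)" using PH by simp
  then have "(m * P - \<omega> * R)\<^sup>2 + 4 * \<omega> * m * H\<^sup>2 = a\<^sup>2 - 4 * b * (n - \<omega>) * \<omega>"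
    unfolding PH a_def b_def nm[symmetric] by algebra
  moreover have "sqrt ((m * P - \<omega> * R)\<^sup>2 + 4 * \<omega> * m * H\<^sup>2) / (\<omega> * m) \<le> dsl_spread V E"
    using eigenvalue_spread_ge_two_block[OF fin sym CV \<open>C \<noteq> {}\<close> \<open>C \<noteq> V\<close>]
    unfolding dsl_spread_def \<omega>_def m_def P_def H_def R_def by simp
  ultimately show ?thesis unfolding nm by (simp add: mult.commute)
qed

lemma eigenvalues_diagonal_plus_ones:
  assumes fin: "finite V" and two: "card V \<ge> 2"
    and M: "\<And>u v. u \<in> V \<Longrightarrow> v \<in> V \<Longrightarrow> M u v = c * of_bool (u = v) + 1"
  shows "{l. is_eigenvalue V M l} = {c + real (card V), c}"
proof -
  have row: "(\<Sum>w\<in>V. M u w * x w) = c * x u + (\<Sum>w\<in>V. x w)" if "u \<in> V" for u x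
  proof -
    have "(\<Sum>w\<in>V. M u w * x w) = (\<Sum>w\<in>V. (if u = w then c * x w else 0) + x w)"
      using that M by (intro sum.cong) (auto simp: algebra_simps)
    then show ?thesis using fin that by (simp add: sum.distrib)
  qed
  show ?thesis
  proof (intro equalityI subsetI)
    fix l assume "l \<in> {l. is_eigenvalue V M l}"
    then obtain x where x: "\<exists>v\<in>V. x v \<noteq> 0" "\<forall>u\<in>V. (\<Sum>w\<in>V. M u w * x w) = l * x u"
      unfolding is_eigenvalue_def by blast
    then have eq: "(l - c) * x u = (\<Sum>w\<in>V. x w)" if "u \<in> V" for u
      using row[OF that, of x] that by (simp add: algebra_simps)
    show "l \<in> {c + real (card V), c}"
    proof (cases "(\<Sum>w\<in>V. x w) = 0")
      case True
      then show ?thesis using x(1) eq by auto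
    next
      case False
      have "(l - c) * (\<Sum>u\<in>V. x u) = real (card V) * (\<Sum>w\<in>V. x w)"
        using eq by (simp add: sum_distrib_left)
      then show ?thesis using False by simp
    qed
  next
    fix l assume "l \<in> {c + real (card V), c}"
    then consider "l = c + real (card V)" | "l = c" by blast
    then show "l \<in> {l. is_eigenvalue V M l}"
    proof cases
      case 1
      obtain v where "v \<in> V" using two by fastforce
      then show ?thesis
        using row[of _ "\<lambda>_. 1"] 1 unfolding is_eigenvalue_def by (intro CollectI exI[of _ "\<lambda>_. 1"]) auto
    next
      case 2
      obtain u v where uv: "u \<in> V" "v \<in> V" "u \<noteq> v"
        using two card_le_Suc0_iff_eq[OF fin] by (metis not_less_eq_eq numeral_2_eq_2)
      define x where "x = (\<lambda>w. of_bool (w = u) - of_bool (w = v) :: real)"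
      have "(\<Sum>w\<in>V. x w) = 0" "x u \<noteq> 0" unfolding x_def using uv fin by (simp_all add: sum_subtractf)
      then show ?thesis
        using row[of _ x] 2 uv unfolding is_eigenvalue_def by (intro CollectI exI[of _ x]) auto
    qed
  qed
qed

lemma dsl_spread_complete_graph:
  assumes sg: "simple_graph V E" and complete: "\<And>u v. u \<in> V \<Longrightarrow> v \<in> V \<Longrightarrow> u \<noteq> v \<Longrightarrow> E u v"
    and two: "card V \<ge> 2"
  shows "dsl_spread V E = real (card V)"
proof -
  have fin: "finite V" using sg by (rule simple_graph_finite)
  have clique: "is_clique V E V" unfolding is_clique_def using complete by blast
  have dist: "real (gdist E u v) = 1 - of_bool (u = v)" if "u \<in> V" "v \<in> V" for u v
    using gdist_in_clique[OF clique that] by simp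
  have "transmission V E u = real (card V) - 1" if "u \<in> V" for u
    using fin that dist by (simp add: transmission_eq_sum sum_subtractf)
  then have "dsl_matrix V E u v = (real (card V) - 2) * of_bool (u = v) + 1"
    if "u \<in> V" "v \<in> V" for u v
    using that dist unfolding dsl_matrix_def by auto
  then have "{l. is_eigenvalue V (dsl_matrix V E) l}
      = {real (card V) - 2 + real (card V), real (card V) - 2}"
    by (rule eigenvalues_diagonal_plus_ones[OF fin two])
  then show ?thesis unfolding dsl_spread_def by simp
qed

lemma clique_number_attained:
  assumes "finite V"
  obtains C where "is_clique V E C" "card C = clique_number V E"
proof -
  have "{card C | C. is_clique V E C} \<subseteq> {..card V}"
    using assms card_mono unfolding is_clique_def by fastforce
  moreover have "is_clique V E {}" unfolding is_clique_def by simp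
  ultimately have "clique_number V E \<in> {card C | C. is_clique V E C}"
    unfolding clique_number_def by (intro Max_in) (auto dest: finite_subset)
  then show ?thesis using that by auto
qed

theorem theorem4p6:
  fixes V :: "'a set" and E :: "'a \<Rightarrow> 'a \<Rightarrow> bool"
  assumes "simple_graph V E" and "connected_graph V E"
    and "clique_number V E \<ge> 2"
  shows "(clique_number V E = card V \<longrightarrow> dsl_spread V E = real (card V))
    \<and> (clique_number V E \<le> card V - 1 \<longrightarrow>
        (let n = real (card V); \<omega> = real (clique_number V E); W = wiener V E
         in dsl_spread V E \<ge>
              Max ((\<lambda>C. let s = (\<Sum>v\<in>C. transmission V E v);
                            a = n * \<omega> * (1 - \<omega>) + 4 * \<omega> * (s - W) - n * s;
                            b = 4 * W * \<omega> * (\<omega> - 1) + 4 * s * (W - s)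
                        in sqrt (a\<^sup>2 - 4 * b * (n - \<omega>) * \<omega>) / ((n - \<omega>) * \<omega>))
                   ` {C. is_clique V E C \<and> card C = clique_number V E})))"
proof -
  have fin: "finite V" using assms(1) by (rule simple_graph_finite)
  let ?cliques = "{C. is_clique V E C \<and> card C = clique_number V E}"
  have "?cliques \<subseteq> Pow V" unfolding is_clique_def by blast
  then have "finite ?cliques" using fin finite_subset by blast
  obtain C0 where C0: "C0 \<in> ?cliques" using clique_number_attained[OF fin] by blast
  show ?thesis
  proof (intro conjI impI, goal_cases)
    case 1
    then have "C0 \<subseteq> V" "card C0 = card V" using C0 unfolding is_clique_def by auto
    then have "C0 = V" using card_subset_eq[OF fin] by blast
    then show ?case
      using dsl_spread_complete_graph[OF assms(1)] C0 assms(3) unfolding is_clique_def by auto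
  next
    case 2
    then have proper: "C \<noteq> {} \<and> C \<noteq> V" if "C \<in> ?cliques" for C
      using that assms(3) by auto
    show ?case unfolding Let_def
    proof (rule Max.boundedI, goal_cases)
      case 1 show ?case using \<open>finite ?cliques\<close> by simp
    next
      case 2 show ?case using C0 by blast
    next
      case (3 y)
      then show ?case
      proof (rule imageE, goal_cases)
        case (1 C)
        then have C: "is_clique V E C" "card C = clique_number V E" "C \<noteq> {}" "C \<noteq> V"
          using proper by auto
        show ?case using 1 dsl_spread_ge_clique_bound[OF assms(1) C(1,3,4), unfolded C(2)] by simp
      qed
    qed
  qed
qed

end
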